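(* Let $\ell\ge2$ be an integer and let $n$ be a positive divisor of $3^\ell+1$ with $2n>3^{\lceil \ell/2\rceil}+1$. Then $\mathrm{ord}_{2n}(3)=2\ell$.
   Context: $\mathrm{ord}_M(3)$ is the multiplicative order of $3$ modulo $M$. *)

theory Defs
  imports "HOL-Number_Theory.Number_Theory"
begin

end

theory Submission
  imports Defs
begin

(* Let d = ord_{2n}(3). As 3^l is odd and n divides 3^l + 1, 2n divides 3^(2l) - 1, so d divides 2l.
   If d divided l, then 3^l would be congruent to both 1 and -1 modulo n, forcing n <= 2.
   Otherwise 2l = dk with k odd, and k >= 3 would give n | 3^e + 1 for e = d/2 with 3e <= l,
   hence 2n <= 2 * 3^e + 2 <= 3^(e+1) + 1 <= 3^(ceil(l/2)) + 1, against the size of n. *)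

lemma pow_double_cong_one_mod_double:
  fixes a n l :: nat
  assumes "odd a" and "n dvd a ^ l + 1"
  shows "[a ^ (2 * l) = 1] (mod 2 * n)"
proof -
  have "2 dvd a ^ l - 1"
    using assms(1) by (simp add: Suc_leI odd_pos)
  then have "2 * n dvd (a ^ l - 1) * (a ^ l + 1)"
    using assms(2) by (rule mult_dvd_mono)
  moreover have "(a ^ l - 1) * (a ^ l + 1) = a ^ (2 * l) - 1"
    by (simp add: power_mult power2_eq_square algebra_simps)
  ultimately show ?thesis
    using assms(1) by (simp add: cong_altdef_nat odd_pos Suc_leI)
qed

lemma ord_eq_double_exponent:
  fixes a m n l :: nat
  assumes "n dvd m" and "n > 2"
    and "[a ^ (2 * l) = 1] (mod m)" and "n dvd a ^ l + 1"
    and no_smaller: "\<And>e. 0 < e \<Longrightarrow> 3 * e \<le> l \<Longrightarrow> \<not> n dvd a ^ e + 1"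
  shows "ord m a = 2 * l"
proof -
  define d where "d = ord m a"
  have "d dvd 2 * l"
    using assms(3) by (simp add: d_def ord_divides')
  then obtain k where k: "2 * l = d * k" by blast
  have not_dvd: "\<not> d dvd l"
  proof
    assume "d dvd l"
    then have "[a ^ l = 1] (mod m)"
      by (simp add: d_def ord_divides')
    then have "[a ^ l = 1] (mod n)"
      using assms(1) by (rule cong_dvd_modulus_nat)
    then have "[a ^ l + 1 = 1 + 1] (mod n)"
      by (rule cong_add) simp
    then have "n dvd 1 + 1"
      using assms(4) cong_dvd_iff by blast
    then have "n \<le> 1 + 1"
      by (rule dvd_imp_le) simp
    with assms(2) show False by simp
  qed
  have "odd k"
  proof
    assume "even k"
    then obtain i where "k = 2 * i" ..
    with k have "l = d * i" by simp
    with not_dvd show False by simp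
  qed
  then obtain j where kj: "k = 2 * j + 1"
    using oddE by blast
  have "even (d * k)"
    unfolding k[symmetric] by simp
  with \<open>odd k\<close> obtain e where e: "d = 2 * e"
    by auto
  have le: "l = e * k" using k e by simp
  have "e > 0" using le not_dvd e by auto
  show ?thesis
  proof (rule ccontr)
    assume "ord m a \<noteq> 2 * l"
    then have "j > 0" using k kj d_def by auto
    then have "3 * e \<le> l" using le kj by simp
    have "[a ^ d = 1] (mod m)"
      by (simp add: d_def ord_divides')
    then have "[a ^ e * (a ^ d) ^ j = a ^ e * 1 ^ j] (mod m)"
      by (intro cong_scalar_left cong_pow)
    moreover have "a ^ e * (a ^ d) ^ j = a ^ l"
      by (simp add: le kj e power_add power_mult[symmetric] algebra_simps)
    ultimately have "[a ^ l = a ^ e] (mod n)"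
      using assms(1) by (simp add: cong_dvd_modulus_nat)
    then have "[a ^ l + 1 = a ^ e + 1] (mod n)"
      by (simp only: cong_add_rcancel_nat)
    then have "n dvd a ^ e + 1"
      using assms(4) cong_dvd_iff by blast
    with no_smaller \<open>e > 0\<close> \<open>3 * e \<le> l\<close> show False by blast
  qed
qed

theorem lemma19:
  fixes l n :: nat
  assumes "l \<ge> 2"
    and "n > 0"
    and "n dvd 3 ^ l + 1"
    and "2 * n > 3 ^ nat \<lceil>real l / 2\<rceil> + 1"
  shows "ord (2 * n) 3 = 2 * l"
proof -
  define c where "c = nat \<lceil>real l / 2\<rceil>"
  have c: "c = (l + 1) div 2"
    unfolding c_def by linarith
  have "(3::nat) ^ 1 \<le> 3 ^ c"
    using assms(1) c by (intro power_increasing) auto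
  moreover have bound: "3 ^ c + 1 < 2 * n"
    using assms(4) c_def by simp
  ultimately have "n > 2" by simp
  show ?thesis
  proof (rule ord_eq_double_exponent)
    show "[3 ^ (2 * l) = 1] (mod 2 * n)"
      using assms(3) by (intro pow_double_cong_one_mod_double) auto
  next
    fix e :: nat
    assume "0 < e" and "3 * e \<le> l"
    then have "(3::nat) ^ (e + 1) \<le> 3 ^ c"
      using c by (intro power_increasing) auto
    moreover have "2 * (3 ^ e + 1) \<le> (3::nat) ^ (e + 1) + 1" by simp
    ultimately have "2 * (3 ^ e + 1) < 2 * n"
      using bound by linarith
    then show "\<not> n dvd 3 ^ e + 1"
      by (auto dest: dvd_imp_le)
  qed (use assms(3) \<open>n > 2\<close> in auto)
qed

end
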